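(* Let $\Lambda^*$ be the group of invertible elements of $\Lambda$. The set $U=\{[v_1,\dots,v_{m+2n}]\in\mathbf{E}: (v_i,v_i)\in\Lambda^*\text{ for }1\le i\le m,\ (v_{m+2j-1},v_{m+2j})\in\Lambda^*\text{ for }1\le j\le n\}$ is dense in $\mathbf{E}$: every polynomial function on $\mathbf{E}$ vanishing on $U$ is identically zero.
   Context: $\Lambda=\varinjlim\wedge(\mathbb{C}^N)$ is the infinite Grassmann algebra ($\mathbb{Z}_2$-graded, supercommutative). $V_{\mathbb{C}}$ is a complex superspace of superdimension $(m|2n)$ with nondegenerate even supersymmetric form and standard homogeneous basis $e_1,\dots,e_{m+2n}$ ($e_1,\dots,e_m$ even); $V=V_{\mathbb{C}}\otimes\Lambda$ with the $\Lambda$-bilinearly extended form. $\mathbf{E}=\mathrm{End}_\Lambda(V)_{\bar0}$; an element $A\in\mathbf{E}$ is written $A=[v_1,\dots,v_{m+2n}]$ where $v_j=Ae_j$ (so $v_j\in V_{\bar0}$ for $j\le m$ and $v_j\in V_{\bar1}$ for $j>m$). A polynomial function on $\mathbf{E}$ is a finite $\Lambda$-linear combination of monomials in the matrix coefficients $a_{ij}\in\Lambda$ of $A$ (defined by $Ae_j=\sum_ie_ia_{ij}$). *)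

theory Defs
  imports Complex_Main
begin

text \<open>Infinite Grassmann algebra Lambda over the complex numbers, generators xi_0, xi_1, ...
  An element is a coefficient function on finite sets S of generator indices
  (S stands for the monomial xi_{s1} ... xi_{sk}, s1 < ... < sk), with finite support.\<close>

type_synonym grass = "nat set \<Rightarrow> complex"

definition is_grass :: "grass \<Rightarrow> bool" where
  "is_grass x \<longleftrightarrow> finite {S. x S \<noteq> 0} \<and> (\<forall>S. x S \<noteq> 0 \<longrightarrow> finite S)"

definition gzero :: grass where "gzero = (\<lambda>S. 0)"
definition gone :: grass where "gone = (\<lambda>S. if S = {} then 1 else 0)"
definition gadd :: "grass \<Rightarrow> grass \<Rightarrow> grass" where "gadd x y = (\<lambda>S. x S + y S)"
definition gsub :: "grass \<Rightarrow> grass \<Rightarrow> grass" where "gsub x y = (\<lambda>S. x S - y S)"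

text \<open>Sign of reordering the product of the ordered monomials T and U.\<close>
definition gsign :: "nat set \<Rightarrow> nat set \<Rightarrow> complex" where
  "gsign T U = (-1) ^ card {(t, u). t \<in> T \<and> u \<in> U \<and> u < t}"

definition gmul :: "grass \<Rightarrow> grass \<Rightarrow> grass" where
  "gmul x y = (\<lambda>S. if finite S then
       (\<Sum>T\<in>Pow S. gsign T (S - T) * x T * y (S - T)) else 0)"

definition gsum :: "grass list \<Rightarrow> grass" where
  "gsum xs = foldr gadd xs gzero"

definition gprod :: "grass list \<Rightarrow> grass" where
  "gprod xs = foldr gmul xs gone"

definition gunit :: "grass \<Rightarrow> bool" where
  "gunit x \<longleftrightarrow> is_grass x \<and> (\<exists>y. is_grass y \<and> gmul x y = gone \<and> gmul y x = gone)"

definition grass_even :: "grass \<Rightarrow> bool" where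
  "grass_even x \<longleftrightarrow> (\<forall>S. x S \<noteq> 0 \<longrightarrow> even (card S))"
definition grass_odd :: "grass \<Rightarrow> bool" where
  "grass_odd x \<longleftrightarrow> (\<forall>S. x S \<noteq> 0 \<longrightarrow> odd (card S))"

text \<open>Parity of the basis vector e_i (indices 1..m+2n; e_1..e_m even).\<close>
definition bodd :: "nat \<Rightarrow> nat \<Rightarrow> bool" where "bodd m i \<longleftrightarrow> m < i"

text \<open>Matrices A with coefficients a_ij (A e_j = sum_i e_i a_ij), indices 1..m+2n, zero outside.\<close>
type_synonym smat = "nat \<Rightarrow> nat \<Rightarrow> grass"

text \<open>E = End_Lambda(V)_0: the even Lambda-linear endomorphisms, i.e. a_ij has parity p(i)+p(j).\<close>
definition Emat :: "nat \<Rightarrow> nat \<Rightarrow> smat set" where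
  "Emat m n = {A. (\<forall>i j. is_grass (A i j)) \<and>
     (\<forall>i j. \<not> (1 \<le> i \<and> i \<le> m + 2*n \<and> 1 \<le> j \<and> j \<le> m + 2*n) \<longrightarrow> A i j = gzero) \<and>
     (\<forall>i j. (bodd m i \<longleftrightarrow> bodd m j) \<longrightarrow> grass_even (A i j)) \<and>
     (\<forall>i j. (bodd m i \<longleftrightarrow> \<not> bodd m j) \<longrightarrow> grass_odd (A i j))}"

text \<open>The Lambda-bilinear extension of the standard even supersymmetric form on V_C,
  (e_i,e_j) = delta_ij for i,j \<le> m, (e_{m+2k-1}, e_{m+2k}) = 1 = -(e_{m+2k}, e_{m+2k-1}),
  evaluated on v = sum_i e_i v_i, w = sum_i e_i w_i (coefficient functions).\<close>
definition sform :: "nat \<Rightarrow> nat \<Rightarrow> (nat \<Rightarrow> grass) \<Rightarrow> (nat \<Rightarrow> grass) \<Rightarrow> grass" where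
  "sform m n v w = gadd (gsum (map (\<lambda>i. gmul (v i) (w i)) [1..<m+1]))
      (gsum (map (\<lambda>k. gsub (gmul (v (m+2*k-1)) (w (m+2*k))) (gmul (v (m+2*k)) (w (m+2*k-1))))
                 [1..<n+1]))"

definition col :: "smat \<Rightarrow> nat \<Rightarrow> nat \<Rightarrow> grass" where "col A j = (\<lambda>i. A i j)"

definition Uset :: "nat \<Rightarrow> nat \<Rightarrow> smat set" where
  "Uset m n = {A \<in> Emat m n.
     (\<forall>i. 1 \<le> i \<and> i \<le> m \<longrightarrow> gunit (sform m n (col A i) (col A i))) \<and>
     (\<forall>k. 1 \<le> k \<and> k \<le> n \<longrightarrow> gunit (sform m n (col A (m+2*k-1)) (col A (m+2*k))))}"

text \<open>Polynomial functions on E: finite Lambda-linear combinations of monomials in the a_ij.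
  A polynomial is a list of terms (c, [(i1,j1),...,(ir,jr)]) denoting c * a_{i1j1} * ... * a_{irjr}.\<close>
type_synonym spoly = "(grass \<times> (nat \<times> nat) list) list"

definition is_spoly :: "spoly \<Rightarrow> bool" where
  "is_spoly p \<longleftrightarrow> (\<forall>t \<in> set p. is_grass (fst t))"

definition speval :: "spoly \<Rightarrow> smat \<Rightarrow> grass" where
  "speval p A = gsum (map (\<lambda>(c, ms). gmul c (gprod (map (\<lambda>(i, j). A i j) ms))) p)"

end

theory Submission
  imports Defs "HOL-Computational_Algebra.Polynomial"
begin

text \<open>Perturb A \<in> E along the identity, A + tI with t \<in> \<complex>. The body (the coefficient of
  the empty monomial) of each of the form values (v_i, v_i) and (v_{m+2j-1}, v_{m+2j}) is then a
  monic quadratic in t, so for all but finitely many t all of them have nonzero body. Being even,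
  they are then invertible, i.e. A + tI \<in> U. Each coefficient of a polynomial function evaluated
  at A + tI is a complex polynomial in t; it vanishes for all but finitely many t, hence
  identically, in particular at t = 0.\<close>

lemma is_grass_gzero [simp]: "is_grass gzero"
  by (simp add: is_grass_def gzero_def)

lemma is_grass_pointwise:
  assumes "is_grass x" "is_grass y" "\<And>S. x S = 0 \<Longrightarrow> y S = 0 \<Longrightarrow> z S = 0"
  shows "is_grass z"
proof -
  have "{S. z S \<noteq> 0} \<subseteq> {S. x S \<noteq> 0} \<union> {S. y S \<noteq> 0}"
    using assms(3) by blast
  then show ?thesis
    using assms unfolding is_grass_def by (meson finite_UnI finite_subset)
qed

lemma is_grass_gadd [simp]: "is_grass x \<Longrightarrow> is_grass y \<Longrightarrow> is_grass (gadd x y)"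
  by (rule is_grass_pointwise[of x y]) (auto simp: gadd_def)

lemma is_grass_gsub [simp]: "is_grass x \<Longrightarrow> is_grass y \<Longrightarrow> is_grass (gsub x y)"
  by (rule is_grass_pointwise[of x y]) (auto simp: gsub_def)

lemma gmul_nonzeroD:
  assumes "gmul x y S \<noteq> 0"
  shows "finite S \<and> (\<exists>T\<subseteq>S. x T \<noteq> 0 \<and> y (S - T) \<noteq> 0)"
proof -
  have "finite S"
    using assms by (auto simp: gmul_def split: if_splits)
  moreover obtain T where "T \<in> Pow S" "gsign T (S - T) * x T * y (S - T) \<noteq> 0"
    using assms \<open>finite S\<close> unfolding gmul_def
    by (meson sum.not_neutral_contains_not_neutral)
  ultimately show ?thesis by auto
qed

lemma is_grass_gmul [simp]:
  assumes "is_grass x" "is_grass y"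
  shows "is_grass (gmul x y)"
proof -
  let ?X = "{S. x S \<noteq> 0}" and ?Y = "{S. y S \<noteq> 0}"
  have "{S. gmul x y S \<noteq> 0} \<subseteq> (\<lambda>(T, U). T \<union> U) ` (?X \<times> ?Y)"
  proof
    fix S assume "S \<in> {S. gmul x y S \<noteq> 0}"
    then obtain T where "T \<subseteq> S" "x T \<noteq> 0" "y (S - T) \<noteq> 0"
      using gmul_nonzeroD by blast
    then show "S \<in> (\<lambda>(T, U). T \<union> U) ` (?X \<times> ?Y)"
      by (intro rev_image_eqI[of "(T, S - T)"]) auto
  qed
  moreover have "finite ?X" "finite ?Y"
    using assms unfolding is_grass_def by blast+
  ultimately show ?thesis
    unfolding is_grass_def by (meson finite_SigmaI finite_imageI finite_subset gmul_nonzeroD)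
qed

lemma is_grass_gsum: "\<forall>x\<in>set xs. is_grass x \<Longrightarrow> is_grass (gsum xs)"
  by (induction xs) (simp_all add: gsum_def)

lemma grass_even_gzero: "grass_even gzero"
  by (simp add: grass_even_def gzero_def)

lemma grass_even_gadd: "grass_even x \<Longrightarrow> grass_even y \<Longrightarrow> grass_even (gadd x y)"
  unfolding grass_even_def gadd_def by (metis add.right_neutral add_0)

lemma grass_even_gsub: "grass_even x \<Longrightarrow> grass_even y \<Longrightarrow> grass_even (gsub x y)"
  unfolding grass_even_def gsub_def by (metis diff_self diff_zero)

lemma grass_even_gsum: "\<forall>x\<in>set xs. grass_even x \<Longrightarrow> grass_even (gsum xs)"
  by (induction xs) (simp_all add: gsum_def grass_even_gzero grass_even_gadd)

lemma card_Diff_add_card: "finite S \<Longrightarrow> T \<subseteq> S \<Longrightarrow> card S = card T + card (S - T)"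
  by (metis card_Diff_subset card_mono finite_subset le_add_diff_inverse)

lemma grass_even_gmul_even:
  "grass_even x \<Longrightarrow> grass_even y \<Longrightarrow> grass_even (gmul x y)"
  unfolding grass_even_def by (metis card_Diff_add_card even_add gmul_nonzeroD)

lemma grass_even_gmul_odd:
  "grass_odd x \<Longrightarrow> grass_odd y \<Longrightarrow> grass_even (gmul x y)"
  unfolding grass_even_def grass_odd_def by (metis card_Diff_add_card odd_add gmul_nonzeroD)

lemma grass_odd_body: "grass_odd x \<Longrightarrow> x {} = 0"
  by (auto simp: grass_odd_def)

lemma gmul_body [simp]: "gmul x y {} = x {} * y {}"
  by (simp add: gmul_def gsign_def)

lemma gsum_body: "gsum xs {} = (\<Sum>x\<leftarrow>xs. x {})"
  by (induction xs) (auto simp: gsum_def gadd_def gzero_def)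

section \<open>Even elements are central\<close>

lemma card_less_pairs_add:
  fixes T U :: "'a::linorder set"
  assumes "finite T" "finite U" "T \<inter> U = {}"
  shows "card {(t, u). t \<in> T \<and> u \<in> U \<and> u < t} + card {(u, t). u \<in> U \<and> t \<in> T \<and> t < u}
    = card T * card U"
proof -
  let ?A = "{(t, u). t \<in> T \<and> u \<in> U \<and> u < t}" and ?B = "{(t, u). t \<in> T \<and> u \<in> U \<and> t < u}"
  have "card {(u, t). u \<in> U \<and> t \<in> T \<and> t < u} = card (prod.swap ` ?B)"
    by (rule arg_cong[where f=card]) force
  also have "\<dots> = card ?B"
    by (rule card_image) (simp add: inj_on_def)
  finally have swap: "card {(u, t). u \<in> U \<and> t \<in> T \<and> t < u} = card ?B" .
  have "finite ?A" "finite ?B"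
    by (rule finite_subset[of _ "T \<times> U"], force, use assms in simp)+
  moreover have "?A \<inter> ?B = {}"
    by force
  ultimately have "card (?A \<union> ?B) = card ?A + card ?B"
    by (rule card_Un_disjoint)
  moreover have "?A \<union> ?B = T \<times> U"
    using assms(3) by (force simp: linorder_neq_iff)
  ultimately show ?thesis
    by (simp add: swap card_cartesian_product)
qed

lemma minus_one_power_eq_if_even_add:
  "even (a + b) \<Longrightarrow> (-1::'a::ring_1) ^ a = (-1) ^ b"
  by (cases "even a") (auto simp: minus_one_power_iff)

lemma gsign_commute:
  assumes "finite T" "finite U" "T \<inter> U = {}" "even (card T)"
  shows "gsign T U = gsign U T"
  unfolding gsign_def
  using card_less_pairs_add[OF assms(1-3)] assms(4)
  by (intro minus_one_power_eq_if_even_add) simp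

lemma gmul_commute_even:
  assumes "grass_even x"
  shows "gmul x y = gmul y x"
proof
  fix S
  show "gmul x y S = gmul y x S"
  proof (cases "finite S")
    case True
    have "(\<Sum>T\<in>Pow S. gsign T (S - T) * y T * x (S - T))
        = (\<Sum>T\<in>Pow S. gsign (S - T) (S - (S - T)) * y (S - T) * x (S - (S - T)))"
      by (rule sum.reindex_bij_witness[of _ "\<lambda>T. S - T" "\<lambda>T. S - T"])
        (auto simp: Diff_Diff_Int Int_absorb1)
    also have "\<dots> = (\<Sum>T\<in>Pow S. gsign T (S - T) * x T * y (S - T))"
    proof (rule sum.cong[OF refl])
      fix T assume T: "T \<in> Pow S"
      then have "S - (S - T) = T" by auto
      moreover have "gsign T (S - T) = gsign (S - T) T" if "x T \<noteq> 0"
        using that assms T True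
        by (intro gsign_commute) (auto simp: grass_even_def intro: finite_subset)
      ultimately show "gsign (S - T) (S - (S - T)) * y (S - T) * x (S - (S - T))
          = gsign T (S - T) * x T * y (S - T)"
        by (cases "x T = 0") simp_all
    qed
    finally show ?thesis
      using True by (simp add: gmul_def)
  qed (simp add: gmul_def)
qed

section \<open>Even elements with nonzero body are units\<close>

text \<open>The right inverse, obtained by solving x y = 1 coefficientwise by
  recursion on the size of the monomial.\<close>

function ginv :: "grass \<Rightarrow> grass" where
  "ginv x S = (if finite S then (if S = {} then 1 / x {} else
     - (1 / x {}) * (\<Sum>T\<in>Pow S - {{}}. gsign T (S - T) * x T * ginv x (S - T))) else 0)"
  by auto
termination
  by (relation "measure (\<lambda>(x, S). card S)") (auto intro!: psubset_card_mono)

declare ginv.simps [simp del]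

lemma ginv_infinite: "infinite S \<Longrightarrow> ginv x S = 0"
  by (simp add: ginv.simps)

lemma ginv_rec:
  "finite S \<Longrightarrow> S \<noteq> {} \<Longrightarrow>
    ginv x S = - (1 / x {}) * (\<Sum>T\<in>Pow S - {{}}. gsign T (S - T) * x T * ginv x (S - T))"
  by (simp add: ginv.simps)

lemma gmul_ginv:
  assumes "x {} \<noteq> 0"
  shows "gmul x (ginv x) = gone"
proof
  fix S
  show "gmul x (ginv x) S = gone S"
  proof (cases "finite S \<and> S \<noteq> {}")
    case True
    have split_empty: "Pow S = insert {} (Pow S - {{}})" by auto
    have "gmul x (ginv x) S
        = x {} * ginv x S + (\<Sum>T\<in>Pow S - {{}}. gsign T (S - T) * x T * ginv x (S - T))"
      using True unfolding gmul_def by (subst split_empty) (simp add: sum.insert_remove gsign_def)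
    also have "\<dots> = 0"
      using assms True by (simp add: ginv_rec field_simps)
    finally show ?thesis
      using True by (simp add: gone_def)
  qed (auto simp: gmul_def gone_def gsign_def ginv.simps assms)
qed

lemma ginv_support: "ginv x S \<noteq> 0 \<Longrightarrow> S \<subseteq> \<Union>{T. x T \<noteq> 0}"
proof (induction x S rule: ginv.induct)
  case (1 x S)
  show ?case
  proof (cases "finite S \<and> S \<noteq> {}")
    case True
    then have "(\<Sum>T\<in>Pow S - {{}}. gsign T (S - T) * x T * ginv x (S - T)) \<noteq> 0"
      using "1.prems" ginv_rec[of S x] by auto
    then obtain T where T: "T \<in> Pow S - {{}}" "gsign T (S - T) * x T * ginv x (S - T) \<noteq> 0"
      by (meson sum.not_neutral_contains_not_neutral)
    then have "S - T \<subseteq> \<Union>{T. x T \<noteq> 0}"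
      using "1.IH" True by simp
    moreover have "T \<subseteq> \<Union>{T. x T \<noteq> 0}"
      using T(2) by (intro Union_upper) simp
    ultimately show ?thesis by blast
  qed (use "1.prems" ginv_infinite in blast)
qed

lemma is_grass_ginv:
  assumes "is_grass x"
  shows "is_grass (ginv x)"
proof -
  have "finite (\<Union>{T. x T \<noteq> 0})"
    using assms unfolding is_grass_def by blast
  then have "finite {S. ginv x S \<noteq> 0}"
    by (rule finite_subset[rotated, OF finite_Pow_iff[THEN iffD2]]) (use ginv_support in blast)
  then show ?thesis
    unfolding is_grass_def using ginv_infinite by blast
qed

lemma gunit_if_even_body_nonzero:
  assumes "is_grass x" "grass_even x" "x {} \<noteq> 0"
  shows "gunit x"
  unfolding gunit_def
  using assms gmul_ginv is_grass_ginv gmul_commute_even by metis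

section \<open>Grassmann-valued polynomial functions of a complex parameter\<close>

definition is_poly_fun :: "(complex \<Rightarrow> complex) \<Rightarrow> bool" where
  "is_poly_fun f \<longleftrightarrow> (\<exists>q. \<forall>t. f t = poly q t)"

lemma is_poly_fun_const [simp]: "is_poly_fun (\<lambda>t. c)"
  unfolding is_poly_fun_def by (rule exI[of _ "[:c:]"]) simp

lemma is_poly_fun_id [simp]: "is_poly_fun (\<lambda>t. t)"
  unfolding is_poly_fun_def by (rule exI[of _ "[:0, 1:]"]) simp

lemma is_poly_fun_add [simp]: "is_poly_fun f \<Longrightarrow> is_poly_fun g \<Longrightarrow> is_poly_fun (\<lambda>t. f t + g t)"
  unfolding is_poly_fun_def by (metis poly_add)

lemma is_poly_fun_mult [simp]: "is_poly_fun f \<Longrightarrow> is_poly_fun g \<Longrightarrow> is_poly_fun (\<lambda>t. f t * g t)"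
  unfolding is_poly_fun_def by (metis poly_mult)

lemma is_poly_fun_sum:
  assumes "\<forall>x\<in>A. is_poly_fun (f x)"
  shows "is_poly_fun (\<lambda>t. \<Sum>x\<in>A. f x t)"
proof -
  obtain q where "\<forall>x\<in>A. \<forall>t. f x t = poly (q x) t"
    using assms unfolding is_poly_fun_def by metis
  then show ?thesis
    unfolding is_poly_fun_def by (intro exI[of _ "\<Sum>x\<in>A. q x"]) (simp add: poly_sum)
qed

lemma is_poly_fun_eq_0_if_cofinite_0:
  assumes "is_poly_fun f" "finite {t. f t \<noteq> 0}"
  shows "f t = 0"
proof -
  obtain q where q: "\<And>t. f t = poly q t"
    using assms(1) unfolding is_poly_fun_def by blast
  have "q = 0"
  proof (rule ccontr)
    assume "q \<noteq> 0"
    then have "finite ({t. f t = 0} \<union> {t. f t \<noteq> 0})"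
      using assms(2) poly_roots_finite by (simp add: q)
    then show False
      using infinite_UNIV_char_0[where 'a=complex] by (simp add: Un_def)
  qed
  then show ?thesis by (simp add: q)
qed

definition grass_poly_fun :: "(complex \<Rightarrow> grass) \<Rightarrow> bool" where
  "grass_poly_fun G \<longleftrightarrow> (\<forall>S. is_poly_fun (\<lambda>t. G t S))"

lemma grass_poly_fun_const [simp]: "grass_poly_fun (\<lambda>t. c)"
  by (simp add: grass_poly_fun_def)

lemma grass_poly_fun_gadd:
  "grass_poly_fun G \<Longrightarrow> grass_poly_fun H \<Longrightarrow> grass_poly_fun (\<lambda>t. gadd (G t) (H t))"
  by (simp add: grass_poly_fun_def gadd_def)

lemma grass_poly_fun_gmul:
  assumes "grass_poly_fun G" "grass_poly_fun H"
  shows "grass_poly_fun (\<lambda>t. gmul (G t) (H t))"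
  unfolding grass_poly_fun_def
proof
  fix S
  show "is_poly_fun (\<lambda>t. gmul (G t) (H t) S)"
  proof (cases "finite S")
    case True
    have "is_poly_fun (\<lambda>t. \<Sum>T\<in>Pow S. gsign T (S - T) * G t T * H t (S - T))"
      using assms unfolding grass_poly_fun_def by (intro is_poly_fun_sum) simp
    then show ?thesis
      using True by (simp add: gmul_def)
  qed (simp add: gmul_def)
qed

lemma grass_poly_fun_gsum:
  "\<forall>a\<in>set xs. grass_poly_fun (\<lambda>t. f t a) \<Longrightarrow> grass_poly_fun (\<lambda>t. gsum (map (f t) xs))"
proof (induction xs)
  case (Cons a xs)
  then show ?case
    using grass_poly_fun_gadd[of "\<lambda>t. f t a" "\<lambda>t. gsum (map (f t) xs)"] by (simp add: gsum_def)
qed (simp add: gsum_def)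

lemma grass_poly_fun_gprod:
  "\<forall>a\<in>set xs. grass_poly_fun (\<lambda>t. f t a) \<Longrightarrow> grass_poly_fun (\<lambda>t. gprod (map (f t) xs))"
proof (induction xs)
  case (Cons a xs)
  then show ?case
    using grass_poly_fun_gmul[of "\<lambda>t. f t a" "\<lambda>t. gprod (map (f t) xs)"] by (simp add: gprod_def)
qed (simp add: gprod_def)

lemma grass_poly_fun_speval:
  assumes "\<And>i j. grass_poly_fun (\<lambda>t. M t i j)"
  shows "grass_poly_fun (\<lambda>t. speval p (M t))"
  unfolding speval_def
proof (intro grass_poly_fun_gsum ballI)
  fix a assume "a \<in> set p"
  obtain c ms where a: "a = (c, ms)" by force
  have "grass_poly_fun (\<lambda>t. gprod (map (\<lambda>(i, j). M t i j) ms))"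
    using assms by (intro grass_poly_fun_gprod) auto
  then show "grass_poly_fun (\<lambda>t. (\<lambda>(c, ms). gmul c (gprod (map (\<lambda>(i, j). M t i j) ms))) a)"
    unfolding a using grass_poly_fun_gmul[of "\<lambda>t. c"] by (simp add: grass_poly_fun_def)
qed

definition shift_diag :: "nat \<Rightarrow> nat \<Rightarrow> smat \<Rightarrow> complex \<Rightarrow> smat" where
  "shift_diag m n A t =
     (\<lambda>i j S. A i j S + (if i = j \<and> 1 \<le> i \<and> i \<le> m + 2*n \<and> S = {} then t else 0))"

lemma shift_diag_0 [simp]: "shift_diag m n A 0 = A"
  by (simp add: shift_diag_def)

lemma grass_poly_fun_shift_diag: "grass_poly_fun (\<lambda>t. shift_diag m n A t i j)"
proof -
  have "is_poly_fun (\<lambda>t. if b then t else 0)" for b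
    by (cases b) simp_all
  then show ?thesis
    by (simp add: grass_poly_fun_def shift_diag_def)
qed

lemma shift_diag_body:
  "1 \<le> j \<Longrightarrow> j \<le> m + 2*n \<Longrightarrow> shift_diag m n A t i j {} = A i j {} + (if i = j then t else 0)"
  by (auto simp: shift_diag_def)

lemma EmatD:
  assumes "A \<in> Emat m n"
  shows "is_grass (A i j)"
    and "\<not> (1 \<le> i \<and> i \<le> m + 2*n \<and> 1 \<le> j \<and> j \<le> m + 2*n) \<Longrightarrow> A i j = gzero"
    and "bodd m i = bodd m j \<Longrightarrow> grass_even (A i j)"
    and "bodd m i \<noteq> bodd m j \<Longrightarrow> grass_odd (A i j)"
  using assms unfolding Emat_def by auto

lemma shift_diag_Emat:
  assumes A: "A \<in> Emat m n"
  shows "shift_diag m n A t \<in> Emat m n"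
  unfolding Emat_def mem_Collect_eq
proof (intro conjI allI impI)
  fix i j
  have "is_grass (A i j)"
    using A by (rule EmatD)
  moreover have "{S. shift_diag m n A t i j S \<noteq> 0} \<subseteq> insert {} {S. A i j S \<noteq> 0}"
    by (auto simp: shift_diag_def split: if_splits)
  ultimately show "is_grass (shift_diag m n A t i j)"
    unfolding is_grass_def
    by (auto simp: shift_diag_def split: if_splits intro: finite_subset)
  show "shift_diag m n A t i j = gzero" if "\<not> (1 \<le> i \<and> i \<le> m + 2*n \<and> 1 \<le> j \<and> j \<le> m + 2*n)"
    using that EmatD(2)[OF A] by (auto simp: shift_diag_def gzero_def)
  show "grass_even (shift_diag m n A t i j)" if "bodd m i = bodd m j"
    using that EmatD(3)[OF A] by (auto simp: grass_even_def shift_diag_def split: if_splits)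
  show "grass_odd (shift_diag m n A t i j)" if "bodd m i = (\<not> bodd m j)"
  proof -
    have "i \<noteq> j"
      using that by auto
    then show ?thesis
      using that EmatD(4)[OF A] by (auto simp: shift_diag_def)
  qed
qed

lemma sum_list_upt_Suc: "(\<Sum>i\<leftarrow>[1..<Suc k]. f i) = (\<Sum>i\<in>{1..k}. f i)"
  by (induction k) (simp_all add: atLeastAtMostSuc_conv add.commute)

lemma sform_body:
  "sform m n v w {} = (\<Sum>i\<in>{1..m}. v i {} * w i {}) +
     (\<Sum>k\<in>{1..n}. v (m+2*k-1) {} * w (m+2*k) {} - v (m+2*k) {} * w (m+2*k-1) {})"
  by (simp only: sform_def gadd_def gsum_body map_map o_def gmul_body gsub_def
      Suc_eq_plus1[symmetric] sum_list_upt_Suc)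

lemma is_grass_sform:
  "\<forall>r. is_grass (v r) \<Longrightarrow> \<forall>r. is_grass (w r) \<Longrightarrow> is_grass (sform m n v w)"
  unfolding sform_def by (auto intro!: is_grass_gadd is_grass_gsum is_grass_gsub)

lemma grass_even_sform:
  assumes "\<And>r s. bodd m r = bodd m s \<Longrightarrow> grass_even (gmul (v r) (w s))"
  shows "grass_even (sform m n v w)"
  unfolding sform_def using assms
  by (auto intro!: grass_even_gadd grass_even_gsum grass_even_gsub simp: bodd_def)

lemma grass_even_gmul_cols:
  assumes "A \<in> Emat m n" "bodd m i = bodd m j" "bodd m r = bodd m s"
  shows "grass_even (gmul (col A i r) (col A j s))"
  using assms EmatD(3,4)[OF assms(1)] unfolding col_def
  by (cases "bodd m r = bodd m i") (auto intro: grass_even_gmul_even grass_even_gmul_odd)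

lemma gunit_sform_cols:
  assumes "A \<in> Emat m n" "bodd m i = bodd m j" "sform m n (col A i) (col A j) {} \<noteq> 0"
  shows "gunit (sform m n (col A i) (col A j))"
  using assms
  by (intro gunit_if_even_body_nonzero is_grass_sform grass_even_sform grass_even_gmul_cols)
    (auto simp: col_def intro: EmatD)

section \<open>The bodies of the form values are monic quadratics in t\<close>

lemma sum_shifted_products:
  fixes x y z :: "nat \<Rightarrow> complex"
  assumes "finite I" "i \<in> I"
  shows "(\<Sum>r\<in>I. (x r + (if r = i then t else 0)) * (y r + (if r = i then t else 0)) - z r)
         = t * t + (x i + y i) * t + (\<Sum>r\<in>I. x r * y r - z r)"
proof -
  have "(\<Sum>r\<in>I. (x r + (if r = i then t else 0)) * (y r + (if r = i then t else 0)) - z r)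
      = (\<Sum>r\<in>I. (x r * y r - z r) + (if r = i then t * t + (x r + y r) * t else 0))"
    by (rule sum.cong) (simp_all add: algebra_simps)
  also have "\<dots> = t * t + (x i + y i) * t + (\<Sum>r\<in>I. x r * y r - z r)"
    using assms by (simp add: sum.distrib sum.delta)
  finally show ?thesis .
qed

lemma finite_roots_monic_quadratic:
  assumes "\<exists>B C. \<forall>t. f t = t * t + B * t + C"
  shows "finite {t::complex. f t = 0}"
proof -
  obtain B C where "\<And>t. f t = t * t + B * t + C"
    using assms by blast
  then have "{t. f t = 0} = {t. poly [:C, B, 1:] t = 0}"
    using assms by (simp add: algebra_simps)
  then show ?thesis
    using poly_roots_finite[of "[:C, B, 1:]"] by simp
qed

lemma sform_shift_diag_even_col_body:
  assumes "1 \<le> i" "i \<le> m"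
  shows "\<exists>B C. \<forall>t.
    sform m n (col (shift_diag m n A t) i) (col (shift_diag m n A t) i) {} = t * t + B * t + C"
proof -
  have "sform m n (col (shift_diag m n A t) i) (col (shift_diag m n A t) i) {}
      = (\<Sum>r\<in>{1..m}. (A r i {} + (if r = i then t else 0)) * (A r i {} + (if r = i then t else 0)))"
    for t using assms by (simp add: sform_body col_def shift_diag_body mult.commute)
  then show ?thesis
    using assms sum_shifted_products[where x="\<lambda>r. A r i {}" and y="\<lambda>r. A r i {}" and z="\<lambda>_. 0"] by auto
qed

text \<open>For the pair of odd columns only the l = k summand of the symplectic part involves t:
  the even rows of an odd column are odd Grassmann elements, so they have zero body.\<close>

lemma sform_shift_diag_odd_cols_body:
  assumes A: "A \<in> Emat m n" and k: "1 \<le> k" "k \<le> n"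
  shows "\<exists>B C. \<forall>t. sform m n (col (shift_diag m n A t) (m+2*k-1)) (col (shift_diag m n A t) (m+2*k)) {}
    = t * t + B * t + C"
proof -
  have even_rows: "A r (m+2*k-1) {} = 0" if "r \<in> {1..m}" for r
    using that k by (intro grass_odd_body EmatD(4)[OF A]) (simp add: bodd_def)
  have "sform m n (col (shift_diag m n A t) (m+2*k-1)) (col (shift_diag m n A t) (m+2*k)) {}
      = (\<Sum>l\<in>{1..n}. (A (m+2*l-1) (m+2*k-1) {} + (if l = k then t else 0))
                      * (A (m+2*l) (m+2*k) {} + (if l = k then t else 0))
                    - A (m+2*l) (m+2*k-1) {} * A (m+2*l-1) (m+2*k) {})" for t
  proof -
    have "(\<Sum>r\<in>{1..m}. col (shift_diag m n A t) (m+2*k-1) r {} * col (shift_diag m n A t) (m+2*k) r {}) = 0"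
      using k even_rows by (intro sum.neutral) (auto simp: col_def shift_diag_body)
    moreover have "(m+2*l-1 = m+2*k-1) = (l = k)" "(m+2*l = m+2*k) = (l = k)"
      "m+2*l \<noteq> m+2*k-1" "m+2*l-1 \<noteq> m+2*k" if "1 \<le> l" for l
      using that k by arith+
    ultimately show ?thesis
      using k by (auto simp: sform_body col_def shift_diag_body intro!: sum.cong)
  qed
  then show ?thesis
    using k by (simp add: sum_shifted_products, blast)
qed

lemma finite_shift_diag_notin_Uset:
  assumes A: "A \<in> Emat m n"
  shows "finite {t. shift_diag m n A t \<notin> Uset m n}"
proof -
  let ?v = "\<lambda>t. col (shift_diag m n A t)"
  let ?bad = "(\<Union>i\<in>{1..m}. {t. sform m n (?v t i) (?v t i) {} = 0})
      \<union> (\<Union>k\<in>{1..n}. {t. sform m n (?v t (m+2*k-1)) (?v t (m+2*k)) {} = 0})"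
  have "finite ?bad"
    using sform_shift_diag_even_col_body sform_shift_diag_odd_cols_body[OF A]
    by (auto intro!: finite_roots_monic_quadratic)
  moreover have "shift_diag m n A t \<in> Uset m n" if "t \<notin> ?bad" for t
    using that shift_diag_Emat[OF A] unfolding Uset_def
    by (auto intro!: gunit_sform_cols simp: bodd_def)
  then have "{t. shift_diag m n A t \<notin> Uset m n} \<subseteq> ?bad"
    by blast
  ultimately show ?thesis
    using finite_subset by blast
qed

theorem lemma6p6:
  fixes m n :: nat and p :: spoly
  assumes "is_spoly p"
    and "\<forall>A \<in> Uset m n. speval p A = gzero"
  shows "\<forall>A \<in> Emat m n. speval p A = gzero"
proof (intro ballI ext)
  fix A S assume A: "A \<in> Emat m n"
  have "is_poly_fun (\<lambda>t. speval p (shift_diag m n A t) S)"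
    using grass_poly_fun_speval[of "shift_diag m n A", OF grass_poly_fun_shift_diag]
    unfolding grass_poly_fun_def by blast
  moreover have "{t. speval p (shift_diag m n A t) S \<noteq> 0} \<subseteq> {t. shift_diag m n A t \<notin> Uset m n}"
    using assms(2) by (auto simp: gzero_def)
  then have "finite {t. speval p (shift_diag m n A t) S \<noteq> 0}"
    using finite_shift_diag_notin_Uset[OF A] by (rule finite_subset)
  ultimately have "speval p (shift_diag m n A 0) S = 0"
    by (rule is_poly_fun_eq_0_if_cofinite_0)
  then show "speval p A S = gzero S"
    by (simp add: gzero_def)
qed

end
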